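(* Let $\mathbf X=(X_1,\dots,X_n)$ be a random vector whose components are mutually independent, each $X_i$ taking values in a finite set $V_i\subset\mathbb{R}$, and let $f:\mathbb{R}^n\to\mathbb{R}$ be arbitrary. Then for all $T\subset T'\subset[n]$ and every $j\in[n]\setminus T'$, $$\mathrm{EVar}(T\cup\{j\})-\mathrm{EVar}(T)\ \ge\ \mathrm{EVar}(T'\cup\{j\})-\mathrm{EVar}(T').$$
   Context: For $T=\{i_1<\dots<i_k\}\subseteq[n]$ write $\mathbf X_T=(X_{i_1},\dots,X_{i_k})$ and $\mathbf V_T=V_{i_1}\times\dots\times V_{i_k}$. Define $$\mathrm{EVar}(T)=\sum_{\mathbf v\in\mathbf V_T,\ \Pr[\mathbf X_T=\mathbf v]>0}\Pr[\mathbf X_T=\mathbf v]\cdot \mathrm{Var}\big(f(\mathbf X)\mid \mathbf X_T=\mathbf v\big),$$ with $\mathrm{EVar}(\emptyset)=\mathrm{Var}(f(\mathbf X))$. *)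

theory Defs
  imports "HOL-Probability.Probability"
begin

text \<open>The random vector X = (X_0, ..., X_{n-1}) is given by the family X of real random
variables on the probability space M; f(X) is f applied to the list of its components.\<close>

definition fX :: "nat \<Rightarrow> (real list \<Rightarrow> real) \<Rightarrow> (nat \<Rightarrow> 'a \<Rightarrow> real) \<Rightarrow> 'a \<Rightarrow> real" where
  "fX n f X = (\<lambda>\<omega>. f (map (\<lambda>i. X i \<omega>) [0..<n]))"

definition cond_event :: "'a measure \<Rightarrow> (nat \<Rightarrow> 'a \<Rightarrow> real) \<Rightarrow> nat set \<Rightarrow> (nat \<Rightarrow> real) \<Rightarrow> 'a set" where
  "cond_event M X T v = {\<omega> \<in> space M. \<forall>i\<in>T. X i \<omega> = v i}"

definition cond_exp_ev :: "'a measure \<Rightarrow> 'a set \<Rightarrow> ('a \<Rightarrow> real) \<Rightarrow> real" where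
  "cond_exp_ev M A g = (\<integral>\<omega>. indicator A \<omega> * g \<omega> \<partial>M) / measure M A"

definition cond_var_ev :: "'a measure \<Rightarrow> 'a set \<Rightarrow> ('a \<Rightarrow> real) \<Rightarrow> real" where
  "cond_var_ev M A g = cond_exp_ev M A (\<lambda>\<omega>. (g \<omega> - cond_exp_ev M A g)\<^sup>2)"

definition EVar :: "'a measure \<Rightarrow> (nat \<Rightarrow> 'a \<Rightarrow> real) \<Rightarrow> (nat \<Rightarrow> real set) \<Rightarrow> nat
    \<Rightarrow> (real list \<Rightarrow> real) \<Rightarrow> nat set \<Rightarrow> real" where
  "EVar M X V n f T =
     (\<Sum>v\<in>{v \<in> PiE T V. measure M (cond_event M X T v) > 0}.
        measure M (cond_event M X T v) * cond_var_ev M (cond_event M X T v) (fX n f X))"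

end

theory Submission
  imports Defs
begin

text \<open>Write h_S = E[f(X) | X_S]. Conditional means are orthogonal projections in L^2, so
  EVar(S) = \<parallel>f\<parallel>^2 - \<parallel>h_S\<parallel>^2 and, by Pythagoras, the claim reads
  \<parallel>d\<parallel>^2 \<le> \<parallel>h_{T'+j} - h_{T'}\<parallel>^2 with d = h_{T+j} - h_T. As d is a function of X_{T+j}, projecting gives
  \<langle>h_{T'+j}, d\<rangle> = \<langle>f, d\<rangle> = \<langle>h_{T+j}, d\<rangle>, while independence of X_j from X_{T'} lets one average
  X_j out against its marginal law, giving \<langle>h_{T'}, d\<rangle> = \<langle>h_T, d\<rangle>. Hence
  \<langle>h_{T'+j} - h_{T'}, d\<rangle> = \<parallel>d\<parallel>^2 and
  0 \<le> \<parallel>h_{T'+j} - h_{T'} - d\<parallel>^2 = \<parallel>h_{T'+j} - h_{T'}\<parallel>^2 - \<parallel>d\<parallel>^2.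
  Everything is finite, so the argument runs on the law of X, a weight on the finite product of
  the V_i.\<close>

locale finite_weights =
  fixes I :: "nat set" and V :: "nat \<Rightarrow> real set" and p :: "(nat \<Rightarrow> real) \<Rightarrow> real"
    and F :: "(nat \<Rightarrow> real) \<Rightarrow> real"
  assumes finite_I: "finite I" and finite_V: "\<And>i. i \<in> I \<Longrightarrow> finite (V i)"
    and p_nonneg: "\<And>w. 0 \<le> p w"
begin

text \<open>The weight p plays the law of X on PiE I V, F plays f; cell S v is the event X_S = v,
  pinner is the L^2(p) inner product and cond_mean S is E[F | X_S].\<close>

definition pinner :: "((nat \<Rightarrow> real) \<Rightarrow> real) \<Rightarrow> ((nat \<Rightarrow> real) \<Rightarrow> real) \<Rightarrow> real" where
  "pinner a b = (\<Sum>w\<in>PiE I V. p w * a w * b w)"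

definition cell :: "nat set \<Rightarrow> (nat \<Rightarrow> real) \<Rightarrow> (nat \<Rightarrow> real) set" where
  "cell S v = {w \<in> PiE I V. \<forall>i\<in>S. w i = v i}"

definition mass :: "nat set \<Rightarrow> (nat \<Rightarrow> real) \<Rightarrow> real" where
  "mass S v = (\<Sum>w\<in>cell S v. p w)"

definition cond_mean :: "nat set \<Rightarrow> (nat \<Rightarrow> real) \<Rightarrow> real" where
  "cond_mean S v = (\<Sum>w\<in>cell S v. p w * F w) / mass S v"

definition expected_cond_var :: "nat set \<Rightarrow> real" where
  "expected_cond_var S = (\<Sum>v\<in>{v \<in> PiE S V. 0 < mass S v}.
      mass S v * ((\<Sum>w\<in>cell S v. p w * (F w - cond_mean S v)^2) / mass S v))"

definition depends_only :: "nat set \<Rightarrow> ((nat \<Rightarrow> real) \<Rightarrow> real) \<Rightarrow> bool" where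
  "depends_only S k \<longleftrightarrow>
     (\<forall>w\<in>PiE I V. \<forall>w'\<in>PiE I V. (\<forall>i\<in>S. w i = w' i) \<longrightarrow> k w = k w')"

definition coord_mass :: "nat \<Rightarrow> real \<Rightarrow> real" where
  "coord_mass j x = (\<Sum>w\<in>{w \<in> PiE I V. w j = x}. p w)"

definition indep_coord :: "nat \<Rightarrow> nat set \<Rightarrow> bool" where
  "indep_coord j S \<longleftrightarrow>
     (\<forall>v\<in>PiE S V. \<forall>x. (\<Sum>w\<in>{w \<in> cell S v. w j = x}. p w) = mass S v * coord_mass j x)"

lemma finite_PiE_subset: "S \<subseteq> I \<Longrightarrow> finite (PiE S V)"
  using finite_subset[of S I] finite_I finite_V by (intro finite_PiE) auto

lemma finite_cell [simp]: "finite (cell S v)"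
  using finite_PiE_subset[of I] unfolding cell_def by simp

lemma cell_eq: "w \<in> cell S v \<Longrightarrow> cell S w = cell S v"
  unfolding cell_def by auto

lemma mass_nonneg: "0 \<le> mass S v"
  unfolding mass_def by (simp add: sum_nonneg p_nonneg)

lemma p_eq_0_if_mass_eq_0: "mass S v = 0 \<Longrightarrow> w \<in> cell S v \<Longrightarrow> p w = 0"
  unfolding mass_def using sum_nonneg_eq_0_iff[of "cell S v" p] p_nonneg by auto

lemma sum_cell_times_const: "(\<Sum>w\<in>cell S v. p w * c) = mass S v * c"
  unfolding mass_def by (simp add: sum_distrib_right)

lemma mass_times_cond_mean: "mass S v * cond_mean S v = (\<Sum>w\<in>cell S v. p w * F w)"
  using p_eq_0_if_mass_eq_0[of S v] by (cases "mass S v = 0") (auto simp: cond_mean_def)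

lemma cond_mean_cell: "w \<in> cell S v \<Longrightarrow> cond_mean S w = cond_mean S v"
  unfolding cond_mean_def mass_def by (simp add: cell_eq)

lemma sum_cells:
  assumes "S \<subseteq> I"
  shows "(\<Sum>w\<in>PiE I V. g w) = (\<Sum>v\<in>PiE S V. \<Sum>w\<in>cell S v. g w)"
proof -
  have "(\<lambda>w. restrict w S) ` PiE I V \<subseteq> PiE S V"
    using assms by (auto simp: PiE_iff)
  then have "(\<Sum>w\<in>PiE I V. g w) = (\<Sum>v\<in>PiE S V. sum g {w. w \<in> PiE I V \<and> restrict w S = v})"
    by (intro sum.group[symmetric] finite_PiE_subset assms order_refl)
  also have "\<dots> = (\<Sum>v\<in>PiE S V. \<Sum>w\<in>cell S v. g w)"
    by (intro sum.cong refl arg_cong[where f = "sum g"])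
      (auto simp: cell_def fun_eq_iff PiE_iff extensional_def)
  finally show ?thesis .
qed

lemma pinner_commute: "pinner a b = pinner b a"
  unfolding pinner_def by (simp add: ac_simps)

lemma pinner_diff_left: "pinner (\<lambda>w. a w - b w) c = pinner a c - pinner b c"
  unfolding pinner_def by (simp add: algebra_simps sum_subtractf)

lemma pinner_diff_right: "pinner a (\<lambda>w. b w - c w) = pinner a b - pinner a c"
  using pinner_diff_left[of b c a] by (simp add: pinner_commute)

lemma pinner_self_nonneg: "0 \<le> pinner a a"
  unfolding pinner_def by (auto intro!: sum_nonneg simp: p_nonneg mult.assoc)

lemma pinner_self_diff:
  "pinner (\<lambda>w. a w - b w) (\<lambda>w. a w - b w) = pinner a a - 2 * pinner a b + pinner b b"
  by (simp add: pinner_diff_left pinner_diff_right pinner_commute[of b a])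

lemma depends_only_mono: "S \<subseteq> S' \<Longrightarrow> depends_only S k \<Longrightarrow> depends_only S' k"
  unfolding depends_only_def by blast

lemma depends_only_diff:
  "depends_only S k \<Longrightarrow> depends_only S k' \<Longrightarrow> depends_only S (\<lambda>w. k w - k' w)"
  unfolding depends_only_def by metis

lemma depends_only_cond_mean: "depends_only S (cond_mean S)"
  unfolding depends_only_def cond_mean_def mass_def cell_def by simp

lemma depends_only_cell:
  assumes "depends_only S k" and "w \<in> cell S v" and "w' \<in> cell S v"
  shows "k w = k w'"
  using assms unfolding depends_only_def cell_def by auto

lemma pinner_cond_mean:
  assumes "S \<subseteq> I" and k: "depends_only S k"
  shows "pinner (cond_mean S) k = pinner F k"
proof -
  have "(\<Sum>w\<in>cell S v. p w * cond_mean S w * k w) = (\<Sum>w\<in>cell S v. p w * F w * k w)" for v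
  proof (cases "cell S v = {}")
    case False
    then obtain u where u: "u \<in> cell S v" by auto
    have "(\<Sum>w\<in>cell S v. p w * cond_mean S w * k w) = (\<Sum>w\<in>cell S v. p w * (cond_mean S v * k u))"
      by (intro sum.cong refl) (simp add: cond_mean_cell depends_only_cell[OF k _ u])
    also have "\<dots> = (\<Sum>w\<in>cell S v. p w * F w) * k u"
      by (simp add: sum_cell_times_const flip: mass_times_cond_mean)
    also have "\<dots> = (\<Sum>w\<in>cell S v. p w * F w * k w)"
      by (simp add: sum_distrib_right depends_only_cell[OF k _ u])
    finally show ?thesis .
  qed simp
  then show ?thesis
    unfolding pinner_def sum_cells[OF assms(1)] by simp
qed

lemma pinner_cond_mean_self:
  "S \<subseteq> I \<Longrightarrow> pinner (cond_mean S) (cond_mean S) = pinner F (cond_mean S)"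
  by (rule pinner_cond_mean[OF _ depends_only_cond_mean])

lemma pinner_cond_mean_nested:
  "S \<subseteq> S' \<Longrightarrow> S' \<subseteq> I \<Longrightarrow> pinner (cond_mean S') (cond_mean S) = pinner (cond_mean S) (cond_mean S)"
  using pinner_cond_mean[OF _ depends_only_mono[OF _ depends_only_cond_mean]] pinner_cond_mean_self
  by (metis order_trans)

lemma expected_cond_var_eq:
  assumes "S \<subseteq> I"
  shows "expected_cond_var S = pinner F F - pinner (cond_mean S) (cond_mean S)"
proof -
  have "expected_cond_var S = (\<Sum>v\<in>PiE S V. \<Sum>w\<in>cell S v. p w * (F w - cond_mean S w)^2)"
    unfolding expected_cond_var_def
  proof (rule sum.mono_neutral_cong_left[OF finite_PiE_subset[OF assms]])
    show "\<forall>v\<in>PiE S V - {v \<in> PiE S V. 0 < mass S v}.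
        (\<Sum>w\<in>cell S v. p w * (F w - cond_mean S w)^2) = 0"
      using mass_nonneg by (force simp: p_eq_0_if_mass_eq_0 less_le)
  qed (auto simp: cond_mean_cell)
  also have "\<dots> = pinner (\<lambda>w. F w - cond_mean S w) (\<lambda>w. F w - cond_mean S w)"
    unfolding pinner_def sum_cells[OF assms] by (simp add: power2_eq_square mult.assoc)
  also have "\<dots> = pinner F F - pinner (cond_mean S) (cond_mean S)"
    using pinner_cond_mean_self[OF assms] by (simp add: pinner_self_diff pinner_commute)
  finally show ?thesis .
qed

lemma pinner_cond_mean_indicator:
  assumes "S \<subseteq> I" and ind: "indep_coord j S" and k: "depends_only S k"
  shows "pinner (cond_mean S) (\<lambda>w. of_bool (w j = x) * k w) = coord_mass j x * pinner F k"
proof -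
  have "(\<Sum>w\<in>cell S v. p w * cond_mean S w * (of_bool (w j = x) * k w))
      = coord_mass j x * (\<Sum>w\<in>cell S v. p w * F w * k w)" if v: "v \<in> PiE S V" for v
  proof (cases "cell S v = {}")
    case False
    then obtain u where u: "u \<in> cell S v" by auto
    have "(\<Sum>w\<in>cell S v. p w * cond_mean S w * (of_bool (w j = x) * k w))
        = cond_mean S v * k u * (\<Sum>w\<in>{w \<in> cell S v. w j = x}. p w)"
    proof -
      have "(\<Sum>w\<in>cell S v. p w * cond_mean S w * (of_bool (w j = x) * k w))
          = (\<Sum>w\<in>cell S v. cond_mean S v * k u * (if w j = x then p w else 0))"
        by (intro sum.cong refl) (simp add: cond_mean_cell depends_only_cell[OF k _ u])
      then show ?thesis
        by (simp add: sum.inter_filter flip: sum_distrib_left)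
    qed
    also have "\<dots> = coord_mass j x * ((\<Sum>w\<in>cell S v. p w * F w) * k u)"
      using ind v by (simp add: indep_coord_def flip: mass_times_cond_mean)
    also have "\<dots> = coord_mass j x * (\<Sum>w\<in>cell S v. p w * F w * k w)"
      by (simp add: sum_distrib_right depends_only_cell[OF k _ u])
    finally show ?thesis .
  qed simp
  then show ?thesis
    unfolding pinner_def sum_cells[OF assms(1)] by (simp add: sum_distrib_left)
qed

text \<open>The right-hand side does not depend on S: X_j is averaged out against its marginal law.\<close>
lemma pinner_cond_mean_indep:
  assumes S: "S \<subseteq> I" and j: "j \<in> I" "j \<notin> S" and ind: "indep_coord j S"
    and k: "depends_only (insert j S) k"
  shows "pinner (cond_mean S) k = (\<Sum>x\<in>V j. coord_mass j x * pinner F (\<lambda>w. k (w(j := x))))"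
proof -
  have split: "k w = (\<Sum>x\<in>V j. of_bool (w j = x) * k (w(j := x)))" if "w \<in> PiE I V" for w
  proof -
    have "(\<Sum>x\<in>V j. of_bool (w j = x) * k (w(j := x))) = (\<Sum>x\<in>V j. if w j = x then k w else 0)"
      by (intro sum.cong) auto
    then show ?thesis
      using that j finite_V[OF j(1)] by (simp add: PiE_mem)
  qed
  have "depends_only S (\<lambda>w. k (w(j := x)))" if x: "x \<in> V j" for x
    unfolding depends_only_def
  proof (intro ballI impI)
    fix w w' assume w: "w \<in> PiE I V" "w' \<in> PiE I V" and agree: "\<forall>i\<in>S. w i = w' i"
    have "w(j := x) \<in> PiE I V" "w'(j := x) \<in> PiE I V"
      using w x j by (auto simp: PiE_iff extensional_def)
    moreover have "\<forall>i\<in>insert j S. (w(j := x)) i = (w'(j := x)) i"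
      using agree by simp
    ultimately show "k (w(j := x)) = k (w'(j := x))"
      using k unfolding depends_only_def by blast
  qed
  then have "pinner (cond_mean S) (\<lambda>w. of_bool (w j = x) * k (w(j := x)))
      = coord_mass j x * pinner F (\<lambda>w. k (w(j := x)))" if "x \<in> V j" for x
    using that by (intro pinner_cond_mean_indicator[OF S ind]) blast
  moreover have "pinner (cond_mean S) k
      = (\<Sum>x\<in>V j. pinner (cond_mean S) (\<lambda>w. of_bool (w j = x) * k (w(j := x))))"
    unfolding pinner_def by (subst sum.swap) (simp add: split sum_distrib_left cong: sum.cong)
  ultimately show ?thesis by simp
qed

lemma pinner_cond_mean_increment:
  assumes "S \<subseteq> S'" and "S' \<subseteq> I"
  shows "pinner (\<lambda>w. cond_mean S' w - cond_mean S w) (\<lambda>w. cond_mean S' w - cond_mean S w)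
       = pinner (cond_mean S') (cond_mean S') - pinner (cond_mean S) (cond_mean S)"
  using pinner_cond_mean_nested[OF assms] by (simp add: pinner_self_diff)

lemma cond_mean_sq_supermodular:
  assumes TU: "T \<subseteq> U" and U: "U \<subseteq> I" and j: "j \<in> I" "j \<notin> U"
    and indT: "indep_coord j T" and indU: "indep_coord j U"
  shows "pinner (cond_mean (insert j T)) (cond_mean (insert j T)) - pinner (cond_mean T) (cond_mean T)
       \<le> pinner (cond_mean (insert j U)) (cond_mean (insert j U)) - pinner (cond_mean U) (cond_mean U)"
proof -
  define A B C D where "A = cond_mean (insert j U)" and "B = cond_mean U"
    and "C = cond_mean (insert j T)" and "D = cond_mean T"
  define d where "d = (\<lambda>w. C w - D w)"
  have T: "T \<subseteq> I" and jT: "j \<notin> T" using TU U j by auto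
  have d_dep: "depends_only (insert j T) d"
    unfolding d_def C_def D_def
    by (intro depends_only_diff depends_only_cond_mean depends_only_mono[OF _ depends_only_cond_mean])
      auto
  have d_dep': "depends_only (insert j U) d"
    using depends_only_mono[OF _ d_dep] TU by blast
  have "pinner A d = pinner F d"
    unfolding A_def using d_dep' U j by (intro pinner_cond_mean) auto
  moreover have "pinner C d = pinner F d"
    unfolding C_def using d_dep T j by (intro pinner_cond_mean) auto
  moreover have "pinner B d = pinner D d"
    unfolding B_def D_def
    using pinner_cond_mean_indep[OF U j indU d_dep'] pinner_cond_mean_indep[OF T j(1) jT indT d_dep]
    by simp
  moreover have "pinner d d = pinner C d - pinner D d"
    unfolding d_def by (rule pinner_diff_left)
  ultimately have AB_d: "pinner (\<lambda>w. A w - B w) d = pinner d d"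
    by (simp add: pinner_diff_left)
  have "0 \<le> pinner (\<lambda>w. A w - B w - d w) (\<lambda>w. A w - B w - d w)"
    by (rule pinner_self_nonneg)
  also have "\<dots> = pinner (\<lambda>w. A w - B w) (\<lambda>w. A w - B w) - pinner d d"
    using pinner_self_diff[of "\<lambda>w. A w - B w" d] AB_d by simp
  also have "\<dots> = (pinner A A - pinner B B) - (pinner C C - pinner D D)"
  proof -
    have "insert j T \<subseteq> I" "U \<subseteq> insert j U" "insert j U \<subseteq> I" using T U j by auto
    then show ?thesis
      unfolding d_def A_def B_def C_def D_def
      by (simp only: pinner_cond_mean_increment subset_insertI)
  qed
  finally show ?thesis unfolding A_def B_def C_def D_def by simp
qed

lemma expected_cond_var_increment_antimono:
  assumes "T \<subseteq> U" and "U \<subseteq> I" and "j \<in> I" "j \<notin> U"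
    and "indep_coord j T" and "indep_coord j U"
  shows "expected_cond_var (insert j U) - expected_cond_var U
       \<le> expected_cond_var (insert j T) - expected_cond_var T"
  using cond_mean_sq_supermodular[OF assms] assms by (simp add: expected_cond_var_eq)

end

lemma (in prob_space) prob_indep_vars_coord:
  assumes ind: "indep_vars (\<lambda>_. borel) X I" and S: "finite S" "S \<subseteq> I" and j: "j \<in> I" "j \<notin> S"
  shows "prob {\<omega> \<in> space M. (\<forall>i\<in>S. X i \<omega> = v i) \<and> X j \<omega> = x}
       = prob {\<omega> \<in> space M. \<forall>i\<in>S. X i \<omega> = v i} * prob {\<omega> \<in> space M. X j \<omega> = (x::real)}"
proof (cases "S = {}")
  case False
  define c where "c = v(j := x)"
  define A where "A i = X i -` {c i} \<inter> space M" for i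
  have indep_sets: "indep_sets (\<lambda>i. {X i -` B \<inter> space M | B. B \<in> sets borel}) I"
    using ind unfolding indep_vars_def2 by blast
  have A_in: "A i \<in> {X i -` B \<inter> space M | B. B \<in> sets borel}" for i
    unfolding A_def by auto
  have "prob (\<Inter>i\<in>insert j S. A i) = (\<Prod>i\<in>insert j S. prob (A i))"
    using S j A_in by (intro indep_setsD[OF indep_sets]) auto
  also have "\<dots> = prob (A j) * (\<Prod>i\<in>S. prob (A i))"
    using S j by simp
  also have "(\<Prod>i\<in>S. prob (A i)) = prob (\<Inter>i\<in>S. A i)"
    using S A_in False by (intro indep_setsD[OF indep_sets, symmetric]) auto
  finally have "prob (\<Inter>i\<in>insert j S. A i) = prob (A j) * prob (\<Inter>i\<in>S. A i)" .
  moreover have "(\<Inter>i\<in>insert j S. A i) = {\<omega> \<in> space M. (\<forall>i\<in>S. X i \<omega> = v i) \<and> X j \<omega> = x}"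
    unfolding A_def c_def using j by auto
  moreover have "(\<Inter>i\<in>S. A i) = {\<omega> \<in> space M. \<forall>i\<in>S. X i \<omega> = v i}"
    unfolding A_def c_def using j False by auto
  moreover have "A j = {\<omega> \<in> space M. X j \<omega> = x}"
    unfolding A_def c_def by auto
  ultimately show ?thesis by simp
qed (simp add: prob_space)

locale finite_indep_vector = prob_space M
  for M :: "'a measure" and X :: "nat \<Rightarrow> 'a \<Rightarrow> real" and V :: "nat \<Rightarrow> real set"
    and I :: "nat set" and F :: "(nat \<Rightarrow> real) \<Rightarrow> real" +
  assumes finite_index: "finite I" and finite_values: "\<And>i. i \<in> I \<Longrightarrow> finite (V i)"
    and indep_X: "indep_vars (\<lambda>_. borel) X I"
    and X_in_V: "\<And>i \<omega>. i \<in> I \<Longrightarrow> \<omega> \<in> space M \<Longrightarrow> X i \<omega> \<in> V i"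
begin

definition sample :: "'a \<Rightarrow> nat \<Rightarrow> real" where
  "sample \<omega> = restrict (\<lambda>i. X i \<omega>) I"

definition law :: "(nat \<Rightarrow> real) \<Rightarrow> real" where
  "law w = prob {\<omega> \<in> space M. sample \<omega> = w}"

sublocale W: finite_weights I V law F
  by unfold_locales (auto simp: finite_index finite_values law_def)

lemma sample_in_PiE: "\<omega> \<in> space M \<Longrightarrow> sample \<omega> \<in> PiE I V"
  by (simp add: sample_def X_in_V)

lemma sets_sample_eq:
  assumes "w \<in> PiE I V"
  shows "{\<omega> \<in> space M. sample \<omega> = w} \<in> sets M"
proof -
  have X_meas: "X i \<in> borel_measurable M" if "i \<in> I" for i
    using indep_X that unfolding indep_vars_def2 by auto
  have "{\<omega> \<in> space M. sample \<omega> = w} = {\<omega> \<in> space M. \<forall>i\<in>I. X i \<omega> = w i}"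
    using assms by (auto simp: sample_def fun_eq_iff PiE_iff extensional_def)
  also have "\<dots> \<in> sets M"
    using X_meas finite_index by measurable
  finally show ?thesis .
qed

lemma integral_sample: "(\<integral>\<omega>. H (sample \<omega>) \<partial>M) = (\<Sum>w\<in>PiE I V. law w * H w)"
proof -
  let ?E = "\<lambda>w. {\<omega> \<in> space M. sample \<omega> = w}"
  have "H (sample \<omega>) = (\<Sum>w\<in>PiE I V. indicator (?E w) \<omega> * H w)" if "\<omega> \<in> space M" for \<omega>
  proof -
    have "(\<Sum>w\<in>PiE I V. indicator (?E w) \<omega> * H w) = (\<Sum>w\<in>PiE I V. if sample \<omega> = w then H w else 0)"
      using that by (intro sum.cong) (auto simp: indicator_def)
    then show ?thesis
      using sample_in_PiE[OF that] W.finite_PiE_subset[of I] by simp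
  qed
  then have "(\<integral>\<omega>. H (sample \<omega>) \<partial>M) = (\<integral>\<omega>. (\<Sum>w\<in>PiE I V. indicator (?E w) \<omega> * H w) \<partial>M)"
    by (intro Bochner_Integration.integral_cong) auto
  also have "\<dots> = (\<Sum>w\<in>PiE I V. law w * H w)"
    using sets_sample_eq
    by (subst Bochner_Integration.integral_sum)
      (auto intro!: integrable_real_indicator simp: law_def emeasure_eq_measure)
  finally show ?thesis .
qed

lemma prob_sample_in:
  assumes "A \<subseteq> PiE I V"
  shows "prob {\<omega> \<in> space M. sample \<omega> \<in> A} = (\<Sum>w\<in>A. law w)"
proof -
  have "prob {\<omega> \<in> space M. sample \<omega> \<in> A} = (\<integral>\<omega>. indicator {\<omega> \<in> space M. sample \<omega> \<in> A} \<omega> \<partial>M)"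
    by (simp add: Int_absorb2)
  also have "\<dots> = (\<integral>\<omega>. indicator A (sample \<omega>) \<partial>M)"
    by (intro Bochner_Integration.integral_cong) (auto simp: indicator_def)
  also have "\<dots> = (\<Sum>w\<in>PiE I V. law w * indicator A w)"
    by (rule integral_sample)
  also have "\<dots> = (\<Sum>w\<in>A. law w)"
    using assms W.finite_PiE_subset[of I] by (simp add: Int_absorb1 flip: Int_def)
  finally show ?thesis .
qed

lemma cond_event_eq_sample:
  assumes "S \<subseteq> I"
  shows "cond_event M X S v = {\<omega> \<in> space M. sample \<omega> \<in> W.cell S v}"
  using assms sample_in_PiE by (auto simp: cond_event_def W.cell_def sample_def)

lemma measure_cond_event: "S \<subseteq> I \<Longrightarrow> measure M (cond_event M X S v) = W.mass S v"
  unfolding cond_event_eq_sample W.mass_def by (rule prob_sample_in) (auto simp: W.cell_def)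

lemma integral_cond_event:
  assumes "S \<subseteq> I"
  shows "(\<integral>\<omega>. indicator (cond_event M X S v) \<omega> * G (sample \<omega>) \<partial>M) = (\<Sum>w\<in>W.cell S v. law w * G w)"
proof -
  have "(\<integral>\<omega>. indicator (cond_event M X S v) \<omega> * G (sample \<omega>) \<partial>M)
      = (\<integral>\<omega>. indicator (W.cell S v) (sample \<omega>) * G (sample \<omega>) \<partial>M)"
    using assms by (intro Bochner_Integration.integral_cong) (auto simp: cond_event_eq_sample indicator_def)
  also have "\<dots> = (\<Sum>w\<in>W.cell S v. law w * G w)"
  proof -
    have "(\<Sum>w\<in>PiE I V. law w * (indicator (W.cell S v) w * G w))
        = (\<Sum>w\<in>PiE I V. indicator (W.cell S v) w * (law w * G w))"
      by (simp add: ac_simps)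
    also have "\<dots> = (\<Sum>w\<in>W.cell S v. law w * G w)"
      using W.finite_PiE_subset[of I] by (simp add: Int_absorb1 W.cell_def)
    finally show ?thesis
      by (simp add: integral_sample[of "\<lambda>w. indicator (W.cell S v) w * G w"])
  qed
  finally show ?thesis .
qed

lemma EVar_eq_expected_cond_var:
  assumes I: "I = {..<n}" and F: "F = (\<lambda>w. f (map w [0..<n]))" and S: "S \<subseteq> I"
  shows "EVar M X V n f S = W.expected_cond_var S"
proof -
  have fX: "fX n f X = (\<lambda>\<omega>. F (sample \<omega>))"
    using I unfolding fX_def F sample_def by (auto simp: fun_eq_iff intro!: arg_cong[where f = f])
  have cond_exp: "cond_exp_ev M (cond_event M X S v) (fX n f X) = W.cond_mean S v" for v
    using integral_cond_event[OF S, of v F]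
    by (simp add: cond_exp_ev_def fX measure_cond_event[OF S] W.cond_mean_def)
  have "cond_var_ev M (cond_event M X S v) (fX n f X)
      = (\<Sum>w\<in>W.cell S v. law w * (F w - W.cond_mean S v)^2) / W.mass S v" for v
    using integral_cond_event[OF S, of v "\<lambda>w. (F w - W.cond_mean S v)^2"]
    by (simp add: cond_var_ev_def cond_exp) (simp add: cond_exp_ev_def fX measure_cond_event[OF S])
  then show ?thesis
    by (simp add: EVar_def W.expected_cond_var_def measure_cond_event[OF S])
qed

lemma indep_coord_law:
  assumes S: "S \<subseteq> I" and j: "j \<in> I" "j \<notin> S"
  shows "W.indep_coord j S"
  unfolding W.indep_coord_def
proof (intro ballI allI)
  fix v x
  have "(\<Sum>w\<in>{w \<in> W.cell S v. w j = x}. law w)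
      = prob {\<omega> \<in> space M. (\<forall>i\<in>S. X i \<omega> = v i) \<and> X j \<omega> = x}"
    using S j by (subst prob_sample_in[symmetric])
      (auto simp: W.cell_def sample_def X_in_V intro!: arg_cong[where f = prob])
  also have "\<dots> = prob {\<omega> \<in> space M. \<forall>i\<in>S. X i \<omega> = v i} * prob {\<omega> \<in> space M. X j \<omega> = x}"
    using S j finite_subset[OF S finite_index] by (intro prob_indep_vars_coord[OF indep_X])
  also have "prob {\<omega> \<in> space M. \<forall>i\<in>S. X i \<omega> = v i} = W.mass S v"
    using measure_cond_event[OF S] by (simp add: cond_event_def)
  also have "prob {\<omega> \<in> space M. X j \<omega> = x} = W.coord_mass j x"
    using j by (subst W.coord_mass_def, subst prob_sample_in[symmetric])
      (auto simp: sample_def X_in_V intro!: arg_cong[where f = prob])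
  finally show "(\<Sum>w\<in>{w \<in> W.cell S v. w j = x}. law w) = W.mass S v * W.coord_mass j x" .
qed

end

theorem mainTheorem3:
  fixes M :: "'a measure" and X :: "nat \<Rightarrow> 'a \<Rightarrow> real" and V :: "nat \<Rightarrow> real set"
    and n :: nat and f :: "real list \<Rightarrow> real" and T T' :: "nat set" and j :: nat
  assumes "prob_space M"
    and "prob_space.indep_vars M (\<lambda>_. borel) X {..<n}"
    and "\<forall>i<n. finite (V i)"
    and "\<forall>i<n. \<forall>\<omega>\<in>space M. X i \<omega> \<in> V i"
    and "T \<subseteq> T'" and "T' \<subseteq> {..<n}"
    and "j \<in> {..<n} - T'"
  shows "EVar M X V n f (insert j T) - EVar M X V n f T
           \<ge> EVar M X V n f (insert j T') - EVar M X V n f T'"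
proof -
  interpret finite_indep_vector M X V "{..<n}" "\<lambda>w. f (map w [0..<n])"
  proof (rule finite_indep_vector.intro[OF assms(1)], unfold_locales)
    show "prob_space.indep_vars M (\<lambda>_. borel) X {..<n}" by (rule assms(2))
  qed (use assms(3,4) in auto)
  have sets: "T \<subseteq> {..<n}" "insert j T \<subseteq> {..<n}" "T' \<subseteq> {..<n}" "insert j T' \<subseteq> {..<n}"
    and j: "j \<in> {..<n}" "j \<notin> T'" "j \<notin> T"
    using assms(5-7) by auto
  show ?thesis
    using W.expected_cond_var_increment_antimono[OF assms(5,6) j(1,2)
        indep_coord_law[OF sets(1) j(1,3)] indep_coord_law[OF sets(3) j(1,2)]]
    unfolding sets[THEN EVar_eq_expected_cond_var[OF refl refl]] by simp
qed

end
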